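(* Let $M$ be a paracompact $\mathcal{C}^1$-smooth Banach manifold modeled on a Banach space $X$ with property $( * )$, and let $N$ be a closed $\mathcal{C}^1$-smooth submanifold of $M$. Then every $\mathcal{C}^1$-smooth function $f:N\to\mathbb{R}$ has a $\mathcal{C}^1$-smooth extension $F:M\to\mathbb{R}$, i.e. $F|_N=f$.
   Context: A Banach space $X$ has property $( * )$ if there is a constant $C_0$, depending only on $X$, such that for every Lipschitz function $f:X\to\mathbb{R}$ and every $\varepsilon>0$ there is a Lipschitz, $\mathcal{C}^1$-smooth function $K:X\to\mathbb{R}$ with $|f(x)-K(x)|<\varepsilon$ for all $x\in X$ and $\operatorname{Lip}(K)\le C_0\operatorname{Lip}(f)$. *)

theory Defs
  imports "HOL-Analysis.Analysis"
begin

definition C1_on :: "'a::real_normed_vector set \<Rightarrow> ('a \<Rightarrow> 'b::real_normed_vector) \<Rightarrow> bool" where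
  "C1_on U g \<longleftrightarrow>
     (\<exists>D :: 'a \<Rightarrow> ('a \<Rightarrow>\<^sub>L 'b).
        (\<forall>x\<in>U. (g has_derivative blinfun_apply (D x)) (at x)) \<and> continuous_on U D)"

text \<open>The derivative at x is a bounded linear functional on Y (represented by a bounded
  linear functional on X, which is no restriction by Hahn--Banach); its continuity is
  measured in the operator norm of functionals on Y.\<close>
definition C1_rel :: "'a::real_normed_vector set \<Rightarrow> 'a set \<Rightarrow> ('a \<Rightarrow> real) \<Rightarrow> bool" where
  "C1_rel Y V g \<longleftrightarrow>
     (\<exists>D :: 'a \<Rightarrow> ('a \<Rightarrow>\<^sub>L real).
        (\<forall>x\<in>V. (g has_derivative blinfun_apply (D x)) (at x within V)) \<and>
        (\<forall>x\<in>V. \<forall>e>0. \<exists>d>0. \<forall>x'\<in>V. dist x' x < d \<longrightarrow>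
            (\<forall>v\<in>Y. \<bar>D x' v - D x v\<bar> \<le> e * norm v)))"

definition Lip :: "('a::metric_space \<Rightarrow> 'b::metric_space) \<Rightarrow> real" where
  "Lip f = Inf {L. lipschitz_on L UNIV f}"

definition property_star :: "'x::banach itself \<Rightarrow> bool" where
  "property_star TYPE('x) \<longleftrightarrow>
     (\<exists>C0::real. \<forall>(f::'x \<Rightarrow> real) (\<epsilon>::real).
        (\<exists>L. lipschitz_on L UNIV f) \<and> \<epsilon> > 0 \<longrightarrow>
        (\<exists>K::'x \<Rightarrow> real. (\<exists>L. lipschitz_on L UNIV K) \<and> C1_on UNIV K \<and>
             (\<forall>x. \<bar>f x - K x\<bar> < \<epsilon>) \<and> Lip K \<le> C0 * Lip f))"

definition locally_finite_family :: "'m::topological_space set set \<Rightarrow> bool" where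
  "locally_finite_family \<V> \<longleftrightarrow>
     (\<forall>x. \<exists>W. open W \<and> x \<in> W \<and> finite {V \<in> \<V>. V \<inter> W \<noteq> {}})"

definition paracompact_space :: "'m::topological_space itself \<Rightarrow> bool" where
  "paracompact_space TYPE('m) \<longleftrightarrow>
     (\<forall>x y::'m. x \<noteq> y \<longrightarrow> (\<exists>U V. open U \<and> open V \<and> x \<in> U \<and> y \<in> V \<and> U \<inter> V = {})) \<and>
     (\<forall>\<U> :: 'm set set. (\<forall>U\<in>\<U>. open U) \<and> \<Union>\<U> = UNIV \<longrightarrow>
        (\<exists>\<V>. (\<forall>V\<in>\<V>. open V) \<and> \<Union>\<V> = UNIV \<and> (\<forall>V\<in>\<V>. \<exists>U\<in>\<U>. V \<subseteq> U) \<and>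
             locally_finite_family \<V>))"

definition is_chart :: "'m::topological_space set \<Rightarrow> ('m \<Rightarrow> 'x::banach) \<Rightarrow> bool" where
  "is_chart U \<phi> \<longleftrightarrow> open U \<and> open (\<phi> ` U) \<and> inj_on \<phi> U \<and>
     continuous_on U \<phi> \<and> continuous_on (\<phi> ` U) (inv_into U \<phi>)"

definition C1_compatible :: "'m::topological_space set \<Rightarrow> ('m \<Rightarrow> 'x::banach) \<Rightarrow>
     'm set \<Rightarrow> ('m \<Rightarrow> 'x) \<Rightarrow> bool" where
  "C1_compatible U \<phi> V \<psi> \<longleftrightarrow>
     C1_on (\<phi> ` (U \<inter> V)) (\<psi> \<circ> inv_into U \<phi>) \<and> C1_on (\<psi> ` (U \<inter> V)) (\<phi> \<circ> inv_into V \<psi>)"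

definition C1_atlas :: "('m::topological_space set \<times> ('m \<Rightarrow> 'x::banach)) set \<Rightarrow> bool" where
  "C1_atlas A \<longleftrightarrow>
     (\<forall>(U,\<phi>)\<in>A. is_chart U \<phi>) \<and> (\<Union>(U,\<phi>)\<in>A. U) = UNIV \<and>
     (\<forall>(U,\<phi>)\<in>A. \<forall>(V,\<psi>)\<in>A. C1_compatible U \<phi> V \<psi>)"

text \<open>Charts of the maximal atlas determined by A.\<close>
definition atlas_chart :: "('m::topological_space set \<times> ('m \<Rightarrow> 'x::banach)) set \<Rightarrow>
     'm set \<Rightarrow> ('m \<Rightarrow> 'x) \<Rightarrow> bool" where
  "atlas_chart A U \<phi> \<longleftrightarrow> is_chart U \<phi> \<and> (\<forall>(V,\<psi>)\<in>A. C1_compatible U \<phi> V \<psi>)"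

definition C1_fun :: "('m::topological_space set \<times> ('m \<Rightarrow> 'x::banach)) set \<Rightarrow> ('m \<Rightarrow> real) \<Rightarrow> bool" where
  "C1_fun A F \<longleftrightarrow> (\<forall>(U,\<phi>)\<in>A. C1_on (\<phi> ` U) (F \<circ> inv_into U \<phi>))"

definition split_subspace :: "'x::banach set \<Rightarrow> bool" where
  "split_subspace Y \<longleftrightarrow> subspace Y \<and> closed Y \<and>
     (\<exists>Z. subspace Z \<and> closed Z \<and> Y \<inter> Z = {0} \<and> (\<forall>x. \<exists>y\<in>Y. \<exists>z\<in>Z. x = y + z))"

definition submanifold_chart :: "('m::topological_space set \<times> ('m \<Rightarrow> 'x::banach)) set \<Rightarrow>
     'm set \<Rightarrow> 'm set \<Rightarrow> ('m \<Rightarrow> 'x) \<Rightarrow> 'x set \<Rightarrow> bool" where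
  "submanifold_chart A N U \<phi> Y \<longleftrightarrow>
     atlas_chart A U \<phi> \<and> split_subspace Y \<and> \<phi> ` (U \<inter> N) = \<phi> ` U \<inter> Y"

definition C1_submanifold :: "('m::topological_space set \<times> ('m \<Rightarrow> 'x::banach)) set \<Rightarrow>
     'm set \<Rightarrow> bool" where
  "C1_submanifold A N \<longleftrightarrow>
     (\<forall>p\<in>N. \<exists>U \<phi> Y. p \<in> U \<and> submanifold_chart A N U \<phi> Y)"

definition C1_fun_on_sub :: "('m::topological_space set \<times> ('m \<Rightarrow> 'x::banach)) set \<Rightarrow>
     'm set \<Rightarrow> ('m \<Rightarrow> real) \<Rightarrow> bool" where
  "C1_fun_on_sub A N f \<longleftrightarrow>
     (\<forall>U \<phi> Y. submanifold_chart A N U \<phi> Y \<longrightarrow> C1_rel Y (\<phi> ` (U \<inter> N)) (f \<circ> inv_into U \<phi>))"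

end

theory Submission
  imports Defs
begin

text \<open>Property (star) turns the truncated distance functions \<open>min 1 (2^k d(x, X - G))\<close>, which are
  \<open>2^k\<close>-Lipschitz, into \<open>C\<^sup>1\<close> functions whose derivatives are of order \<open>2^k\<close>. Composing them with a
  \<open>C\<^sup>1\<close> ramp and summing with weights \<open>4^-k\<close> gives a \<open>C\<^sup>1\<close> function on the model space whose
  positivity set is exactly the open set \<open>G\<close>; transported by charts, these are bump functions on \<open>M\<close>.
  Near a point of \<open>N\<close>, a submanifold chart \<open>\<phi>\<close> and a bounded projection \<open>P\<close> onto the complemented
  subspace \<open>Y\<close> extend \<open>f\<close> locally by \<open>f \<circ> \<phi>\<inverse> \<circ> P \<circ> \<phi>\<close>; away from the closed set \<open>N\<close> the
  local extension is \<open>0\<close>. Paracompactness yields a locally finite refinement of the cover by such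
  neighbourhoods, and the local extensions are glued with the partition of unity formed by the bumps.\<close>

section \<open>\<open>C\<^sup>1\<close> maps on open subsets of normed spaces\<close>

lemma C1_onI:
  assumes "\<And>x. x \<in> U \<Longrightarrow> (g has_derivative blinfun_apply (D x)) (at x)" "continuous_on U D"
  shows "C1_on U g"
  using assms unfolding C1_on_def by blast

lemma C1_on_imp_continuous_on: "C1_on U g \<Longrightarrow> continuous_on U g"
  unfolding C1_on_def by (metis continuous_at_imp_continuous_on has_derivative_continuous)

lemma C1_on_subset: "C1_on U g \<Longrightarrow> T \<subseteq> U \<Longrightarrow> C1_on T g"
  unfolding C1_on_def by (meson continuous_on_subset subsetD)

lemma C1_on_cong:
  assumes "C1_on U g" "open U" "\<And>x. x \<in> U \<Longrightarrow> g x = h x"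
  shows "C1_on U h"
proof -
  obtain D where D: "\<And>x. x \<in> U \<Longrightarrow> (g has_derivative blinfun_apply (D x)) (at x)" "continuous_on U D"
    using assms(1) unfolding C1_on_def by blast
  show ?thesis
    by (rule C1_onI[OF _ D(2)])
      (use has_derivative_transform_within_open[OF D(1) assms(2)] assms(3) in blast)
qed

lemma C1_on_Union:
  assumes "\<And>S. S \<in> \<S> \<Longrightarrow> open S" "\<And>S. S \<in> \<S> \<Longrightarrow> C1_on S g"
  shows "C1_on (\<Union>\<S>) g"
proof -
  obtain DD where DD: "\<And>S x. S \<in> \<S> \<Longrightarrow> x \<in> S \<Longrightarrow> (g has_derivative blinfun_apply (DD S x)) (at x)"
    and DDc: "\<And>S. S \<in> \<S> \<Longrightarrow> continuous_on S (DD S)"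
    using assms(2) unfolding C1_on_def by metis
  define D where "D x = DD (SOME S. S \<in> \<S> \<and> x \<in> S) x" for x
  have D_eq: "D x = DD S x" if "S \<in> \<S>" "x \<in> S" for S x
  proof -
    let ?T = "SOME S. S \<in> \<S> \<and> x \<in> S"
    have "?T \<in> \<S> \<and> x \<in> ?T" using someI[of "\<lambda>S. S \<in> \<S> \<and> x \<in> S"] that by blast
    then have "blinfun_apply (DD ?T x) = blinfun_apply (DD S x)"
      using has_derivative_unique DD that by blast
    then show ?thesis unfolding D_def by (metis blinfun_eqI)
  qed
  show ?thesis
  proof (rule C1_onI)
    show "(g has_derivative blinfun_apply (D x)) (at x)" if "x \<in> \<Union>\<S>" for x
      using that DD D_eq by (metis UnionE)
    show "continuous_on (\<Union>\<S>) D"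
      by (rule continuous_on_open_Union)
        (use assms(1) DDc D_eq continuous_on_cong in metis)+
  qed
qed

lemma C1_on_compose:
  fixes f :: "'a::real_normed_vector \<Rightarrow> 'b::real_normed_vector" and g :: "'b \<Rightarrow> 'c::real_normed_vector"
  assumes "C1_on S f" "C1_on T g" "f ` S \<subseteq> T"
  shows "C1_on S (g \<circ> f)"
proof -
  obtain Df where Df: "\<And>x. x \<in> S \<Longrightarrow> (f has_derivative blinfun_apply (Df x)) (at x)" "continuous_on S Df"
    using assms(1) unfolding C1_on_def by blast
  obtain Dg where Dg: "\<And>y. y \<in> T \<Longrightarrow> (g has_derivative blinfun_apply (Dg y)) (at y)" "continuous_on T Dg"
    using assms(2) unfolding C1_on_def by blast
  show ?thesis
  proof (rule C1_onI[where D="\<lambda>x. Dg (f x) o\<^sub>L Df x"])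
    fix x assume x: "x \<in> S"
    then have "f x \<in> T" using assms(3) by blast
    then show "(g \<circ> f has_derivative blinfun_apply (Dg (f x) o\<^sub>L Df x)) (at x)"
      by (rule has_derivative_eq_rhs[OF diff_chain_at[OF Df(1)[OF x] Dg(1)]]) (auto simp: o_def)
  next
    have "continuous_on S (Dg \<circ> f)"
      by (rule continuous_on_compose[OF C1_on_imp_continuous_on[OF assms(1)]])
        (rule continuous_on_subset[OF Dg(2) assms(3)])
    then show "continuous_on S (\<lambda>x. Dg (f x) o\<^sub>L Df x)"
      using Df(2) by (auto intro!: continuous_intros simp: o_def)
  qed
qed

lemma C1_on_const: "C1_on S (\<lambda>x. c)"
  by (rule C1_onI[where D="\<lambda>x. 0"]) (auto intro!: derivative_eq_intros continuous_intros)

lemma C1_on_add: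
  fixes f g :: "'a::real_normed_vector \<Rightarrow> 'b::real_normed_vector"
  assumes "C1_on S f" "C1_on S g"
  shows "C1_on S (\<lambda>x. f x + g x)"
proof -
  obtain Df where "\<And>x. x \<in> S \<Longrightarrow> (f has_derivative blinfun_apply (Df x)) (at x)" "continuous_on S Df"
    using assms(1) unfolding C1_on_def by blast
  moreover obtain Dg where "\<And>x. x \<in> S \<Longrightarrow> (g has_derivative blinfun_apply (Dg x)) (at x)" "continuous_on S Dg"
    using assms(2) unfolding C1_on_def by blast
  ultimately show ?thesis
    by (intro C1_onI[where D="\<lambda>x. Df x + Dg x"])
      (auto intro!: continuous_intros derivative_eq_intros simp: blinfun.add_left)
qed

lemma C1_on_mult:
  fixes f g :: "'a::real_normed_vector \<Rightarrow> real"
  assumes "C1_on S f" "C1_on S g"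
  shows "C1_on S (\<lambda>x. f x * g x)"
proof -
  obtain Df where Df: "\<And>x. x \<in> S \<Longrightarrow> (f has_derivative blinfun_apply (Df x)) (at x)" "continuous_on S Df"
    using assms(1) unfolding C1_on_def by blast
  obtain Dg where Dg: "\<And>x. x \<in> S \<Longrightarrow> (g has_derivative blinfun_apply (Dg x)) (at x)" "continuous_on S Dg"
    using assms(2) unfolding C1_on_def by blast
  show ?thesis
  proof (rule C1_onI[where D="\<lambda>x. f x *\<^sub>R Dg x + g x *\<^sub>R Df x"])
    fix x assume x: "x \<in> S"
    show "((\<lambda>x. f x * g x) has_derivative blinfun_apply (f x *\<^sub>R Dg x + g x *\<^sub>R Df x)) (at x)"
      by (rule has_derivative_eq_rhs[OF has_derivative_mult[OF Df(1)[OF x] Dg(1)[OF x]]])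
        (simp add: fun_eq_iff blinfun.add_left blinfun.scaleR_left)
  next
    show "continuous_on S (\<lambda>x. f x *\<^sub>R Dg x + g x *\<^sub>R Df x)"
      using Df(2) Dg(2) C1_on_imp_continuous_on[OF assms(1)] C1_on_imp_continuous_on[OF assms(2)]
      by (auto intro!: continuous_intros)
  qed
qed

lemma C1_on_divide:
  fixes f g :: "'a::real_normed_vector \<Rightarrow> real"
  assumes "C1_on S f" "C1_on S g" "\<And>x. x \<in> S \<Longrightarrow> g x \<noteq> 0"
  shows "C1_on S (\<lambda>x. f x / g x)"
proof -
  obtain Df where Df: "\<And>x. x \<in> S \<Longrightarrow> (f has_derivative blinfun_apply (Df x)) (at x)" "continuous_on S Df"
    using assms(1) unfolding C1_on_def by blast
  obtain Dg where Dg: "\<And>x. x \<in> S \<Longrightarrow> (g has_derivative blinfun_apply (Dg x)) (at x)" "continuous_on S Dg"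
    using assms(2) unfolding C1_on_def by blast
  show ?thesis
  proof (rule C1_onI[where D="\<lambda>x. (1 / g x) *\<^sub>R Df x - (f x / (g x)\<^sup>2) *\<^sub>R Dg x"])
    fix x assume x: "x \<in> S"
    show "((\<lambda>x. f x / g x) has_derivative blinfun_apply ((1 / g x) *\<^sub>R Df x - (f x / (g x)\<^sup>2) *\<^sub>R Dg x)) (at x)"
      by (rule has_derivative_eq_rhs[OF has_derivative_divide[OF Df(1)[OF x] Dg(1)[OF x] assms(3)[OF x]]])
        (use assms(3)[OF x] in \<open>auto simp: blinfun.diff_left blinfun.scaleR_left field_simps power2_eq_square\<close>)
  next
    show "continuous_on S (\<lambda>x. (1 / g x) *\<^sub>R Df x - (f x / (g x)\<^sup>2) *\<^sub>R Dg x)"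
      using Df(2) Dg(2) C1_on_imp_continuous_on[OF assms(1)] C1_on_imp_continuous_on[OF assms(2)] assms(3)
      by (auto intro!: continuous_intros)
  qed
qed

section \<open>Functions that are \<open>C\<^sup>1\<close> on an open subset of the manifold\<close>

definition C1_fun_on :: "('m::topological_space set \<times> ('m \<Rightarrow> 'x::banach)) set \<Rightarrow> 'm set \<Rightarrow> ('m \<Rightarrow> real) \<Rightarrow> bool" where
  "C1_fun_on A W F \<longleftrightarrow> (\<forall>(V,\<psi>)\<in>A. C1_on (\<psi> ` (V \<inter> W)) (F \<circ> inv_into V \<psi>))"

lemma C1_fun_eq_C1_fun_on_UNIV: "C1_fun A F \<longleftrightarrow> C1_fun_on A UNIV F"
  unfolding C1_fun_def C1_fun_on_def by simp

lemma is_chart_open_image: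
  assumes "is_chart V \<psi>" "open W"
  shows "open (\<psi> ` (V \<inter> W))"
proof -
  have c: "continuous_on (\<psi> ` V) (inv_into V \<psi>)" "open (\<psi> ` V)" "inj_on \<psi> V" "open V"
    using assms(1) unfolding is_chart_def by auto
  have "\<psi> ` (V \<inter> W) = \<psi> ` V \<inter> inv_into V \<psi> -` (V \<inter> W)"
    using inv_into_f_f[OF c(3)] by force
  moreover have "open (\<psi> ` V \<inter> inv_into V \<psi> -` (V \<inter> W))"
    using c(1,2) continuous_on_open_vimage open_Int[OF c(4) assms(2)] by (metis Int_commute)
  ultimately show ?thesis by simp
qed

lemma atlas_chart_if_mem: "C1_atlas A \<Longrightarrow> (U, \<phi>) \<in> A \<Longrightarrow> atlas_chart A U \<phi>"
  unfolding C1_atlas_def atlas_chart_def by auto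

lemma atlas_chartD:
  assumes "atlas_chart A U \<phi>"
  shows "is_chart U \<phi>" "open U" "inj_on \<phi> U" "open (\<phi> ` U)" "continuous_on U \<phi>"
  using assms unfolding atlas_chart_def is_chart_def by auto

lemma C1_fun_on_subset: "C1_fun_on A W F \<Longrightarrow> W' \<subseteq> W \<Longrightarrow> C1_fun_on A W' F"
  unfolding C1_fun_on_def by (auto intro: C1_on_subset)

lemma C1_fun_if_locally_C1:
  assumes A: "C1_atlas A" and loc: "\<And>m. \<exists>W. open W \<and> m \<in> W \<and> C1_fun_on A W F"
  shows "C1_fun A F"
  unfolding C1_fun_def
proof safe
  fix V \<psi> assume V: "(V, \<psi>) \<in> A"
  have ch: "is_chart V \<psi>" using A V unfolding C1_atlas_def by auto
  let ?S = "{\<psi> ` (V \<inter> W) | W. open W \<and> C1_fun_on A W F}"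
  have "\<psi> ` V = \<Union>?S"
  proof safe
    fix v assume "v \<in> V"
    then obtain W where "open W" "v \<in> W" "C1_fun_on A W F" using loc by blast
    then show "\<psi> v \<in> \<Union>?S" using \<open>v \<in> V\<close> by blast
  qed auto
  moreover have "C1_on (\<Union>?S) (F \<circ> inv_into V \<psi>)"
    by (rule C1_on_Union) (use is_chart_open_image[OF ch] V in \<open>auto simp: C1_fun_on_def\<close>)
  ultimately show "C1_on (\<psi> ` V) (F \<circ> inv_into V \<psi>)" by simp
qed

lemma C1_fun_on_cong:
  assumes A: "C1_atlas A" and "C1_fun_on A W F" "open W" "\<And>m. m \<in> W \<Longrightarrow> F m = G m"
  shows "C1_fun_on A W G"
  unfolding C1_fun_on_def
proof safe
  fix V \<psi> assume V: "(V, \<psi>) \<in> A"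
  have ch: "is_chart V \<psi>" using A V unfolding C1_atlas_def by auto
  then have inj: "inj_on \<psi> V" unfolding is_chart_def by auto
  show "C1_on (\<psi> ` (V \<inter> W)) (G \<circ> inv_into V \<psi>)"
    by (rule C1_on_cong[of _ "F \<circ> inv_into V \<psi>"])
      (use assms V is_chart_open_image[OF ch] inv_into_f_f[OF inj] in \<open>auto simp: C1_fun_on_def\<close>)
qed

lemma C1_fun_on_const: "C1_fun_on A W (\<lambda>m. c)"
  unfolding C1_fun_on_def by (auto simp: o_def intro: C1_on_const)

lemma C1_fun_on_add: "C1_fun_on A W F \<Longrightarrow> C1_fun_on A W G \<Longrightarrow> C1_fun_on A W (\<lambda>m. F m + G m)"
  unfolding C1_fun_on_def by (auto simp: o_def intro!: C1_on_add[simplified])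

lemma C1_fun_on_mult: "C1_fun_on A W F \<Longrightarrow> C1_fun_on A W G \<Longrightarrow> C1_fun_on A W (\<lambda>m. F m * G m)"
  unfolding C1_fun_on_def by (auto simp: o_def intro!: C1_on_mult[simplified])

lemma C1_fun_on_sum:
  "finite I \<Longrightarrow> (\<And>i. i \<in> I \<Longrightarrow> C1_fun_on A W (F i)) \<Longrightarrow> C1_fun_on A W (\<lambda>m. \<Sum>i\<in>I. F i m)"
  by (induction I rule: finite_induct) (auto intro: C1_fun_on_add C1_fun_on_const)

lemma C1_fun_on_divide:
  assumes A: "C1_atlas A" and "C1_fun_on A W F" "C1_fun_on A W G" "\<And>m. m \<in> W \<Longrightarrow> G m \<noteq> 0"
  shows "C1_fun_on A W (\<lambda>m. F m / G m)"
  unfolding C1_fun_on_def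
proof safe
  fix V \<psi> assume V: "(V, \<psi>) \<in> A"
  then have "inj_on \<psi> V" using A unfolding C1_atlas_def is_chart_def by auto
  moreover have "C1_on (\<psi> ` (V \<inter> W)) (F \<circ> inv_into V \<psi>)" "C1_on (\<psi> ` (V \<inter> W)) (G \<circ> inv_into V \<psi>)"
    using assms(2,3) V unfolding C1_fun_on_def by auto
  ultimately have "C1_on (\<psi> ` (V \<inter> W)) (\<lambda>y. (F \<circ> inv_into V \<psi>) y / (G \<circ> inv_into V \<psi>) y)"
    using assms(4) by (intro C1_on_divide) (auto simp: o_def)
  then show "C1_on (\<psi> ` (V \<inter> W)) ((\<lambda>m. F m / G m) \<circ> inv_into V \<psi>)"
    by (simp add: o_def)
qed

lemma C1_fun_on_chart_pullback:
  assumes A: "C1_atlas A" and U: "atlas_chart A U \<phi>" and W: "W \<subseteq> U"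
    and g: "C1_on (\<phi> ` W) g"
  shows "C1_fun_on A W (\<lambda>m. g (\<phi> m))"
  unfolding C1_fun_on_def
proof safe
  fix V \<psi> assume V: "(V, \<psi>) \<in> A"
  then have inj: "inj_on \<psi> V" using A unfolding C1_atlas_def is_chart_def by auto
  have "C1_compatible U \<phi> V \<psi>" using U V unfolding atlas_chart_def by auto
  then have t: "C1_on (\<psi> ` (U \<inter> V)) (\<phi> \<circ> inv_into V \<psi>)" unfolding C1_compatible_def by auto
  have "C1_on (\<psi> ` (V \<inter> W)) (g \<circ> (\<phi> \<circ> inv_into V \<psi>))"
  proof (rule C1_on_compose[OF C1_on_subset[OF t] g])
    show "\<psi> ` (V \<inter> W) \<subseteq> \<psi> ` (U \<inter> V)" using W by auto
    show "(\<phi> \<circ> inv_into V \<psi>) ` \<psi> ` (V \<inter> W) \<subseteq> \<phi> ` W"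
      using inv_into_f_f[OF inj] by auto
  qed
  then show "C1_on (\<psi> ` (V \<inter> W)) ((\<lambda>m. g (\<phi> m)) \<circ> inv_into V \<psi>)" by (simp add: o_def)
qed

lemma C1_fun_extend_by_zero:
  assumes A: "C1_atlas A" and W: "open W" "C1_fun_on A W F"
    and V: "closure V \<subseteq> W" "\<And>m. m \<in> W \<Longrightarrow> m \<notin> V \<Longrightarrow> F m = 0"
  shows "C1_fun A (\<lambda>m. if m \<in> W then F m else 0)"
proof (rule C1_fun_if_locally_C1[OF A])
  fix m
  show "\<exists>W'. open W' \<and> m \<in> W' \<and> C1_fun_on A W' (\<lambda>m. if m \<in> W then F m else 0)"
  proof (cases "m \<in> W")
    case True
    have "C1_fun_on A W (\<lambda>m. if m \<in> W then F m else 0)"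
      by (rule C1_fun_on_cong[OF A W(2) W(1)]) simp
    then show ?thesis using True W(1) by blast
  next
    case False
    have "C1_fun_on A (- closure V) (\<lambda>m. if m \<in> W then F m else 0)"
    proof (rule C1_fun_on_cong[OF A C1_fun_on_const])
      fix m' assume "m' \<in> - closure V"
      then show "0 = (if m' \<in> W then F m' else 0)" using V(2) closure_subset by fastforce
    qed auto
    moreover have "m \<in> - closure V" using False V(1) by blast
    ultimately show ?thesis by blast
  qed
qed

lemma C1_fun_locally_finite_sum:
  assumes A: "C1_atlas A" and lf: "locally_finite_family \<V>"
    and g: "\<And>V. V \<in> \<V> \<Longrightarrow> C1_fun A (g V)" "\<And>V m. V \<in> \<V> \<Longrightarrow> m \<notin> V \<Longrightarrow> g V m = 0"
  shows "C1_fun A (\<lambda>m. \<Sum>V\<in>{V\<in>\<V>. m \<in> V}. g V m)"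
proof (rule C1_fun_if_locally_C1[OF A])
  fix m
  obtain W where W: "open W" "m \<in> W" "finite {V \<in> \<V>. V \<inter> W \<noteq> {}}"
    using lf unfolding locally_finite_family_def by blast
  define F where "F = {V \<in> \<V>. V \<inter> W \<noteq> {}}"
  have "C1_fun_on A W (\<lambda>m'. \<Sum>V\<in>F. g V m')"
    by (rule C1_fun_on_sum[OF W(3)[folded F_def]])
      (use g(1) in \<open>auto simp: F_def C1_fun_eq_C1_fun_on_UNIV intro: C1_fun_on_subset\<close>)
  moreover have "(\<Sum>V\<in>F. g V m') = (\<Sum>V\<in>{V\<in>\<V>. m' \<in> V}. g V m')" if "m' \<in> W" for m'
    by (rule sum.mono_neutral_right[OF W(3)[folded F_def]]) (use that g(2) in \<open>auto simp: F_def\<close>)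
  ultimately have "C1_fun_on A W (\<lambda>m'. \<Sum>V\<in>{V\<in>\<V>. m' \<in> V}. g V m')"
    by (rule C1_fun_on_cong[OF A _ W(1)])
  then show "\<exists>W. open W \<and> m \<in> W \<and> C1_fun_on A W (\<lambda>m. \<Sum>V\<in>{V\<in>\<V>. m \<in> V}. g V m)"
    using W(1,2) by blast
qed


section \<open>Regularity of paracompact spaces\<close>

lemma locally_finite_family_not_in_closure_Union:
  assumes lf: "locally_finite_family \<V>" and "\<W> \<subseteq> \<V>" and p: "\<And>V. V \<in> \<W> \<Longrightarrow> p \<notin> closure V"
  shows "p \<notin> closure (\<Union>\<W>)"
proof -
  obtain W where W: "open W" "p \<in> W" "finite {V \<in> \<V>. V \<inter> W \<noteq> {}}"
    using lf unfolding locally_finite_family_def by blast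
  define F where "F = {V \<in> \<W>. V \<inter> W \<noteq> {}}"
  have "finite F" unfolding F_def by (rule finite_subset[OF _ W(3)]) (use assms(2) in blast)
  then have "open (W - \<Union>(closure ` F))" using W(1) by (intro open_Diff closed_Union) auto
  moreover have "(W - \<Union>(closure ` F)) \<inter> \<Union>\<W> = {}"
  proof -
    { fix x V assume "x \<in> W" "x \<in> V" "V \<in> \<W>"
      then have "V \<in> F" unfolding F_def by blast
      then have "x \<in> \<Union>(closure ` F)" using \<open>x \<in> V\<close> closure_subset by blast }
    then show ?thesis by blast
  qed
  ultimately have "(W - \<Union>(closure ` F)) \<inter> closure (\<Union>\<W>) = {}"
    by (simp add: open_Int_closure_eq_empty)
  moreover have "p \<in> W - \<Union>(closure ` F)" using W(2) p unfolding F_def by blast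
  ultimately show ?thesis by blast
qed

lemma paracompact_space_refinement:
  fixes \<U> :: "'m::topological_space set set"
  assumes "paracompact_space TYPE('m)" "\<And>U. U \<in> \<U> \<Longrightarrow> open U" "\<Union>\<U> = UNIV"
  obtains \<V> where "\<And>V. V \<in> \<V> \<Longrightarrow> open V" "\<Union>\<V> = UNIV" "\<And>V. V \<in> \<V> \<Longrightarrow> \<exists>U\<in>\<U>. V \<subseteq> U"
    "locally_finite_family \<V>"
proof -
  have "(\<forall>U\<in>\<U>. open U) \<and> \<Union>\<U> = UNIV \<longrightarrow>
      (\<exists>\<V>. (\<forall>V\<in>\<V>. open V) \<and> \<Union>\<V> = UNIV \<and> (\<forall>V\<in>\<V>. \<exists>U\<in>\<U>. V \<subseteq> U) \<and>
             locally_finite_family \<V>)"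
    using assms(1) unfolding paracompact_space_def by (rule spec[OF conjunct2])
  then obtain \<V> where "(\<forall>V\<in>\<V>. open V) \<and> \<Union>\<V> = UNIV \<and> (\<forall>V\<in>\<V>. \<exists>U\<in>\<U>. V \<subseteq> U) \<and>
      locally_finite_family \<V>"
    using assms(2,3) by blast
  then have "\<And>V. V \<in> \<V> \<Longrightarrow> open V" "\<Union>\<V> = UNIV" "\<And>V. V \<in> \<V> \<Longrightarrow> \<exists>U\<in>\<U>. V \<subseteq> U"
    "locally_finite_family \<V>"
    by auto
  then show ?thesis by (rule that)
qed

lemma paracompact_space_regular:
  assumes P: "paracompact_space TYPE('m::topological_space)" and Om: "open Om" "(p::'m) \<in> Om"
  shows "\<exists>G. open G \<and> p \<in> G \<and> closure G \<subseteq> Om"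
proof -
  have haus: "\<And>x y::'m. x \<noteq> y \<Longrightarrow> \<exists>U V. open U \<and> open V \<and> x \<in> U \<and> y \<in> V \<and> U \<inter> V = {}"
    using P unfolding paracompact_space_def by blast
  define \<U> where "\<U> = insert Om {U. open U \<and> p \<notin> closure U}"
  have "c \<in> \<Union>\<U>" for c
  proof (cases "c \<in> Om")
    case False
    then obtain U W where UW: "open U" "open W" "c \<in> U" "p \<in> W" "U \<inter> W = {}"
      using haus[of c p] Om(2) by metis
    then have "p \<notin> closure U" by (metis disjoint_iff open_Int_closure_eq_empty)
    then have "U \<in> \<U>" unfolding \<U>_def using UW(1) by simp
    then show ?thesis using UW(3) by blast
  qed (simp add: \<U>_def)
  then have "\<Union>\<U> = UNIV" by blast
  moreover have "\<And>U. U \<in> \<U> \<Longrightarrow> open U" unfolding \<U>_def using Om(1) by auto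
  ultimately obtain \<V> where V: "\<And>V. V \<in> \<V> \<Longrightarrow> open V" "\<Union>\<V> = UNIV"
    "\<And>V. V \<in> \<V> \<Longrightarrow> \<exists>U\<in>\<U>. V \<subseteq> U" "locally_finite_family \<V>"
    using paracompact_space_refinement[OF P] by metis
  define E where "E = \<Union>{V\<in>\<V>. V - Om \<noteq> {}}"
  have "p \<notin> closure V" if VV: "V \<in> \<V>" "V - Om \<noteq> {}" for V
  proof -
    obtain U where U: "U \<in> \<U>" "V \<subseteq> U" using V(3)[OF VV(1)] by blast
    then have "p \<notin> closure U" using VV(2) unfolding \<U>_def by blast
    then show ?thesis using closure_mono[OF U(2)] by blast
  qed
  then have "p \<notin> closure E"
    unfolding E_def by (intro locally_finite_family_not_in_closure_Union[OF V(4)]) auto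
  moreover have "closure (- closure E) \<subseteq> Om"
  proof -
    have "open E" unfolding E_def using V(1) by auto
    then have "E \<inter> closure (- closure E) = {}"
      using open_Int_closure_eq_empty[of E "- closure E"] closure_subset by blast
    moreover have "- Om \<subseteq> E"
    proof
      fix x assume x: "x \<in> - Om"
      have "x \<in> \<Union>\<V>" using V(2) by simp
      then obtain V where "V \<in> \<V>" "x \<in> V" by blast
      then show "x \<in> E" unfolding E_def using x by blast
    qed
    ultimately show ?thesis by blast
  qed
  ultimately show ?thesis by (intro exI[of _ "- closure E"]) auto
qed

section \<open>Derivatives of Lipschitz functions\<close>

lemma Lip_le: "lipschitz_on L UNIV f \<Longrightarrow> Lip f \<le> L"
  unfolding Lip_def by (rule cInf_lower) (auto intro: bdd_belowI[where m=0] lipschitz_on_nonneg)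

lemma Lip_nonneg: "lipschitz_on L UNIV f \<Longrightarrow> 0 \<le> Lip f"
  unfolding Lip_def by (rule cInf_greatest) (auto intro: lipschitz_on_nonneg)

lemma lipschitz_on_derivative_bound:
  fixes K :: "'a::real_normed_vector \<Rightarrow> 'b::real_normed_vector"
  assumes L: "lipschitz_on L UNIV K" and D: "(K has_derivative D) (at x)"
  shows "norm (D v) \<le> L * norm v"
proof (cases "v = 0")
  case True
  then show ?thesis using D has_derivative_bounded_linear linear_simps(3)
    by (metis bounded_linear.linear norm_zero mult_zero_right order_refl)
next
  case False
  have bl: "bounded_linear D" using D has_derivative_bounded_linear by blast
  have "norm (D v) \<le> L * norm v + e" if e: "e > 0" for e
  proof -
    define e' where "e' = e / norm v"
    have e': "e' > 0" using e False unfolding e'_def by simp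
    obtain d where d: "d > 0" "\<forall>y. norm (y - x) < d \<longrightarrow> norm (K y - K x - D (y - x)) \<le> e' * norm (y - x)"
      using D e' unfolding has_derivative_at_alt by blast
    define t where "t = d / (2 * norm v)"
    have t: "t > 0" "norm (t *\<^sub>R v) < d" using d False unfolding t_def by (simp_all add: field_simps)
    have "norm (D (t *\<^sub>R v)) \<le> norm (K (x + t *\<^sub>R v) - K x) + norm (K (x + t *\<^sub>R v) - K x - D (t *\<^sub>R v))"
      by (metis add.commute diff_add_cancel norm_minus_commute norm_triangle_ineq4 add_diff_cancel_left')
    also have "\<dots> \<le> L * norm (t *\<^sub>R v) + e' * norm (t *\<^sub>R v)"
    proof (rule add_mono)
      show "norm (K (x + t *\<^sub>R v) - K x) \<le> L * norm (t *\<^sub>R v)"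
        using lipschitz_onD[OF L, of "x + t *\<^sub>R v" x] by (simp add: dist_norm)
      show "norm (K (x + t *\<^sub>R v) - K x - D (t *\<^sub>R v)) \<le> e' * norm (t *\<^sub>R v)"
        using d(2)[rule_format, of "x + t *\<^sub>R v"] t(2) by simp
    qed
    finally have "t * norm (D v) \<le> t * (L * norm v + e' * norm v)"
      using t by (simp add: linear_scale[OF bounded_linear.linear[OF bl]] algebra_simps)
    then have "norm (D v) \<le> L * norm v + e' * norm v" using t by simp
    then show ?thesis unfolding e'_def using False by simp
  qed
  then show ?thesis using field_le_epsilon by blast
qed

lemma Lip_derivative_bound:
  fixes K :: "'a::real_normed_vector \<Rightarrow> 'b::real_normed_vector"
  assumes L: "lipschitz_on L UNIV K" and D: "(K has_derivative D) (at x)"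
  shows "norm (D v) \<le> Lip K * norm v"
proof (cases "v = 0")
  case True
  then show ?thesis using lipschitz_on_derivative_bound[OF L D, of v] by simp
next
  case False
  have "norm (D v) / norm v \<le> Lip K"
    unfolding Lip_def
  proof (rule cInf_greatest)
    show "{L. lipschitz_on L UNIV K} \<noteq> {}" using L by blast
    fix L' assume "L' \<in> {L. lipschitz_on L UNIV K}"
    then show "norm (D v) / norm v \<le> L'" using lipschitz_on_derivative_bound[of L' K D x v] D False
      by (simp add: divide_le_eq)
  qed
  then show ?thesis using False by (simp add: divide_le_eq mult.commute)
qed


section \<open>\<open>C\<^sup>1\<close> bump functions on the model space\<close>

definition ramp :: "real \<Rightarrow> real" where "ramp t = (max 0 (t - 1/4))\<^sup>2"
definition ramp_deriv :: "real \<Rightarrow> real" where "ramp_deriv t = 2 * max 0 (t - 1/4)"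

lemma ramp_has_real_derivative: "(ramp has_real_derivative ramp_deriv t) (at t)"
proof -
  consider "t < 1/4" | "t > 1/4" | "t = 1/4" by linarith
  then show ?thesis
  proof cases
    case 1
    have "((\<lambda>s. 0) has_real_derivative ramp_deriv t) (at t)" using 1 by (simp add: ramp_deriv_def)
    then show ?thesis
      by (rule has_field_derivative_transform_within_open[where S="{..<1/4}"])
        (use 1 in \<open>auto simp: ramp_def ramp_deriv_def\<close>)
  next
    case 2
    have "((\<lambda>s. (s - 1/4)\<^sup>2) has_real_derivative ramp_deriv t) (at t)"
      using 2 by (auto intro!: derivative_eq_intros simp: ramp_deriv_def)
    then show ?thesis
      by (rule has_field_derivative_transform_within_open[where S="{1/4<..}"])
        (use 2 in \<open>auto simp: ramp_def ramp_deriv_def\<close>)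
  next
    case 3
    have "(ramp has_derivative (\<lambda>h. ramp_deriv t * h)) (at t)"
      unfolding has_derivative_at_alt
    proof (intro conjI allI impI)
      show "bounded_linear ((*) (ramp_deriv t))" by (simp add: bounded_linear_mult_right)
      fix e :: real assume e: "e > 0"
      show "\<exists>d>0. \<forall>y. norm (y - t) < d \<longrightarrow> norm (ramp y - ramp t - ramp_deriv t * (y - t)) \<le> e * norm (y - t)"
      proof (intro exI[of _ e] conjI allI impI)
        fix y assume y: "norm (y - t) < e"
        have "max 0 (y - 1/4) \<le> \<bar>y - t\<bar>" using 3 by auto
        then have "ramp y \<le> (y - t)\<^sup>2"
          unfolding ramp_def by (metis power2_abs power_mono max.cobounded1)
        also have "\<dots> = norm (y - t) * norm (y - t)" by (simp add: power2_eq_square abs_mult_self_eq)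
        also have "\<dots> \<le> e * norm (y - t)" using y by (intro mult_right_mono) auto
        finally show "norm (ramp y - ramp t - ramp_deriv t * (y - t)) \<le> e * norm (y - t)"
          by (simp add: 3 ramp_def ramp_deriv_def)
      qed (use e in auto)
    qed
    then show ?thesis by (simp add: has_field_derivative_def)
  qed
qed

lemma ramp_compose:
  fixes K :: "'a::real_normed_vector \<Rightarrow> real"
  assumes d: "\<And>x. (K has_derivative blinfun_apply (DK x)) (at x)" and c: "continuous_on UNIV DK"
  shows "((\<lambda>x. ramp (K x)) has_derivative blinfun_apply (ramp_deriv (K x) *\<^sub>R DK x)) (at x)"
    and "continuous_on UNIV (\<lambda>x. ramp_deriv (K x) *\<^sub>R DK x)"
proof -
  have r: "(ramp has_derivative (*) (ramp_deriv t)) (at t)" for t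
    using ramp_has_real_derivative[of t] unfolding has_field_derivative_def .
  show "((\<lambda>x. ramp (K x)) has_derivative blinfun_apply (ramp_deriv (K x) *\<^sub>R DK x)) (at x)"
    by (rule has_derivative_eq_rhs[OF diff_chain_at[OF d r, unfolded o_def]])
      (simp add: fun_eq_iff blinfun.scaleR_left mult.commute)
  have "continuous_on UNIV K"
    using d has_derivative_continuous continuous_at_imp_continuous_on by blast
  then show "continuous_on UNIV (\<lambda>x. ramp_deriv (K x) *\<^sub>R DK x)"
    unfolding ramp_deriv_def using c by (auto intro!: continuous_intros)
qed

lemma C1_on_suminf:
  fixes T :: "nat \<Rightarrow> 'a::real_normed_vector \<Rightarrow> 'b::banach"
  assumes dT: "\<And>k x. (T k has_derivative blinfun_apply (DT k x)) (at x)"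
    and cT: "\<And>k. continuous_on UNIV (DT k)"
    and bound: "\<And>k x. norm (DT k x) \<le> B k" and B: "summable B"
    and sumT: "\<And>x. summable (\<lambda>k. T k x)"
  shows "C1_on UNIV (\<lambda>x. \<Sum>k. T k x)"
proof -
  define D where "D x = (\<Sum>k. DT k x)" for x
  have ul: "uniform_limit UNIV (\<lambda>n x. \<Sum>k<n. DT k x) D sequentially"
    unfolding D_def by (rule Weierstrass_m_test[OF bound B])
  have cD: "continuous_on UNIV D"
    by (rule uniform_limit_theorem[OF _ ul]) (auto intro!: always_eventually continuous_on_sum cT)
  obtain g where g: "\<forall>x\<in>UNIV. (\<lambda>k. T k x) sums (g x) \<and> (g has_derivative blinfun_apply (D x)) (at x within UNIV)"
  proof (atomize_elim, rule has_derivative_series[where f'="\<lambda>k x. blinfun_apply (DT k x)"])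
    show "\<And>k x. x \<in> UNIV \<Longrightarrow> (T k has_derivative blinfun_apply (DT k x)) (at x within UNIV)"
      using dT by simp
    show "(\<lambda>k. T k 0) sums (\<Sum>k. T k 0)" using sumT summable_sums by blast
    fix e :: real assume e: "e > 0"
    show "\<forall>\<^sub>F n in sequentially. \<forall>x\<in>UNIV. \<forall>h. norm ((\<Sum>k<n. blinfun_apply (DT k x) h) - blinfun_apply (D x) h) \<le> e * norm h"
    proof (rule eventually_mono[OF uniform_limitD[OF ul e]], intro ballI allI)
      fix n x and h :: 'a assume "\<forall>x\<in>UNIV. dist (\<Sum>k<n. DT k x) (D x) < e"
      then have "norm ((\<Sum>k<n. DT k x) - D x) \<le> e" by (simp add: dist_norm less_imp_le)
      then have "norm ((\<Sum>k<n. DT k x) - D x) * norm h \<le> e * norm h"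
        by (rule mult_right_mono) simp
      moreover have "(\<Sum>k<n. blinfun_apply (DT k x) h) - blinfun_apply (D x) h = blinfun_apply ((\<Sum>k<n. DT k x) - D x) h"
        by (simp add: blinfun.sum_left blinfun.diff_left)
      ultimately show "norm ((\<Sum>k<n. blinfun_apply (DT k x) h) - blinfun_apply (D x) h) \<le> e * norm h"
        by (metis norm_blinfun order_trans)
    qed
  qed auto
  have "g = (\<lambda>x. \<Sum>k. T k x)" using g sums_unique by fastforce
  then show ?thesis using g cD unfolding C1_on_def by auto
qed

lemma property_star_C1_approximation:
  assumes "property_star TYPE('x::banach)"
  obtains C :: real where "C \<ge> 1"
    and "\<And>(f::'x \<Rightarrow> real) L \<epsilon>. lipschitz_on L UNIV f \<Longrightarrow> \<epsilon> > 0 \<Longrightarrow>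
       \<exists>K DK. (\<forall>x. (K has_derivative blinfun_apply (DK x)) (at x)) \<and> continuous_on UNIV DK \<and>
              (\<forall>x. \<bar>f x - K x\<bar> < \<epsilon>) \<and> (\<forall>x. norm (DK x) \<le> C * L)"
proof -
  obtain C0 where C0: "\<And>(f::'x\<Rightarrow>real) \<epsilon>. (\<exists>L. lipschitz_on L UNIV f) \<Longrightarrow> \<epsilon> > 0 \<Longrightarrow>
     \<exists>K. (\<exists>L. lipschitz_on L UNIV K) \<and> C1_on UNIV K \<and> (\<forall>x. \<bar>f x - K x\<bar> < \<epsilon>) \<and> Lip K \<le> C0 * Lip f"
    using assms unfolding property_star_def by blast
  have "\<exists>K DK. (\<forall>x. (K has_derivative blinfun_apply (DK x)) (at x)) \<and> continuous_on UNIV DK \<and>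
      (\<forall>x. \<bar>f x - K x\<bar> < \<epsilon>) \<and> (\<forall>x. norm (DK x) \<le> (\<bar>C0\<bar> + 1) * L)"
    if f: "lipschitz_on L UNIV f" and \<epsilon>: "\<epsilon> > 0" for f :: "'x \<Rightarrow> real" and L \<epsilon>
  proof -
    obtain K LK where K: "lipschitz_on LK UNIV K" "C1_on UNIV K" "\<forall>x. \<bar>f x - K x\<bar> < \<epsilon>"
      "Lip K \<le> C0 * Lip f"
      using C0[OF _ \<epsilon>] f by blast
    obtain DK where DK: "\<forall>x. (K has_derivative blinfun_apply (DK x)) (at x)" "continuous_on UNIV DK"
      using K(2) unfolding C1_on_def by blast
    have "C0 * Lip f \<le> (\<bar>C0\<bar> + 1) * L"
      using Lip_le[OF f] Lip_nonneg[OF f] lipschitz_on_nonneg[OF f]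
      by (smt (verit) mult_mono abs_ge_self abs_ge_zero)
    then have LK: "Lip K \<le> (\<bar>C0\<bar> + 1) * L" using K(4) by linarith
    have "norm (DK x) \<le> (\<bar>C0\<bar> + 1) * L" for x
    proof (rule norm_blinfun_bound)
      show "0 \<le> (\<bar>C0\<bar> + 1) * L" using lipschitz_on_nonneg[OF f] by simp
      show "norm (DK x v) \<le> (\<bar>C0\<bar> + 1) * L * norm v" for v
        using Lip_derivative_bound[OF K(1) DK(1)[rule_format, of x], of v]
          mult_right_mono[OF LK norm_ge_zero[of v]] by linarith
    qed
    then show ?thesis using DK K(3) by blast
  qed
  then show ?thesis using that[of "\<bar>C0\<bar> + 1"] by simp
qed

lemma lipschitz_on_min_one_infdist:
  "c \<ge> 0 \<Longrightarrow> lipschitz_on c UNIV (\<lambda>x. min 1 (c * infdist x S))"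
proof (rule lipschitz_onI)
  fix x y assume "c \<ge> 0"
  then have "\<bar>c * infdist x S - c * infdist y S\<bar> \<le> c * dist x y"
    using infdist_triangle_abs[of x S y] by (simp add: abs_mult right_diff_distrib[symmetric] mult_left_mono)
  then show "dist (min 1 (c * infdist x S)) (min 1 (c * infdist y S)) \<le> c * dist x y"
    unfolding dist_real_def by linarith
qed

lemma C1_distance_layer:
  fixes S :: "'x::banach set"
  assumes "property_star TYPE('x)"
  shows "\<exists>(T :: 'x \<Rightarrow> real) DT. (\<forall>x. (T has_derivative blinfun_apply (DT x)) (at x)) \<and> continuous_on UNIV DT \<and>
    (\<forall>x. norm (DT x) \<le> 2 * (1/2)^k) \<and> (\<forall>x. 0 \<le> T x \<and> T x \<le> (1/4)^k) \<and>
    (\<forall>x. infdist x S = 0 \<longrightarrow> T x = 0) \<and> (\<forall>x. 1 \<le> 2^k * infdist x S \<longrightarrow> 0 < T x)"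
proof -
  obtain C where C: "C \<ge> 1" and approx: "\<And>(f::'x \<Rightarrow> real) L \<epsilon>. lipschitz_on L UNIV f \<Longrightarrow> \<epsilon> > 0 \<Longrightarrow>
       \<exists>K DK. (\<forall>x. (K has_derivative blinfun_apply (DK x)) (at x)) \<and> continuous_on UNIV DK \<and>
              (\<forall>x. \<bar>f x - K x\<bar> < \<epsilon>) \<and> (\<forall>x. norm (DK x) \<le> C * L)"
    using property_star_C1_approximation[OF assms] by blast
  define f where "f x = min 1 (2^k * infdist x S)" for x
  have "lipschitz_on (2^k) UNIV f" unfolding f_def by (rule lipschitz_on_min_one_infdist) simp
  then obtain K DK where K: "\<And>x. (K has_derivative blinfun_apply (DK x)) (at x)" "continuous_on UNIV DK"
    "\<And>x. \<bar>f x - K x\<bar> < 1/4" "\<And>x. norm (DK x) \<le> C * 2^k"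
    using approx[of "2^k" f "1/4"] by auto
  have f_range: "0 \<le> f x" "f x \<le> 1" for x unfolding f_def by (simp_all add: infdist_nonneg)
  have K_range: "-1/4 < K x" "K x < 5/4" for x
    using f_range[of x] K(3)[of x] unfolding abs_less_iff by linarith+
  have ramp_bounds: "0 \<le> ramp (K x)" "ramp (K x) \<le> 1" "0 \<le> ramp_deriv (K x)" "ramp_deriv (K x) \<le> 2" for x
    using K_range[of x] by (auto simp: ramp_def ramp_deriv_def power_le_one)
  define c :: real where "c = 1 / (C * 4^k)"
  have c: "0 < c" "c \<le> (1/4)^k" "c * (C * 2^k) = (1/2)^k"
    using C by (auto simp: c_def field_simps power_mult_distrib[symmetric])
  define T where "T x = c * ramp (K x)" for x
  define DT where "DT x = c *\<^sub>R (ramp_deriv (K x) *\<^sub>R DK x)" for x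
  show ?thesis
  proof (intro exI[of _ T] exI[of _ DT] conjI allI impI)
    show "(T has_derivative blinfun_apply (DT x)) (at x)" for x
      unfolding T_def DT_def
      by (rule has_derivative_eq_rhs[OF has_derivative_mult_right[OF ramp_compose(1)[OF K(1,2)]]])
        (simp add: fun_eq_iff blinfun.scaleR_left)
    show "continuous_on UNIV DT"
      unfolding DT_def by (intro continuous_on_scaleR continuous_on_const ramp_compose(2)[OF K(1,2)])
    show "norm (DT x) \<le> 2 * (1/2)^k" for x
    proof -
      have "norm (DT x) = c * ramp_deriv (K x) * norm (DK x)"
        unfolding DT_def using c(1) ramp_bounds[of x] by simp
      also have "\<dots> \<le> c * 2 * (C * 2^k)"
        using c(1) ramp_bounds[of x] K(4)[of x] by (simp add: mult_mono)
      finally show ?thesis using c(3) by (simp add: algebra_simps)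
    qed
    show "0 \<le> T x" "T x \<le> (1/4)^k" for x
      unfolding T_def using c ramp_bounds[of x] by (auto intro: order_trans[OF mult_left_le])
    show "T x = 0" if "infdist x S = 0" for x
      using K(3)[of x] that unfolding T_def f_def by (simp add: ramp_def)
    show "0 < T x" if "1 \<le> 2^k * infdist x S" for x
    proof -
      have "f x = 1" using that unfolding f_def by simp
      then have "K x > 3/4" using K(3)[of x] unfolding abs_less_iff by linarith
      then show ?thesis using c(1) unfolding T_def ramp_def by simp
    qed
  qed
qed

lemma C1_bump_on_model_space:
  fixes G :: "'x::banach set"
  assumes ps: "property_star TYPE('x)" and G: "open G"
  shows "\<exists>h :: 'x \<Rightarrow> real. C1_on UNIV h \<and> (\<forall>x. 0 \<le> h x) \<and> (\<forall>x. 0 < h x \<longleftrightarrow> x \<in> G)"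
proof (cases "G = UNIV")
  case True
  have "C1_on UNIV (\<lambda>x::'x. 1::real)" by (rule C1_on_const)
  with True show ?thesis by auto
next
  case False
  obtain T :: "nat \<Rightarrow> 'x \<Rightarrow> real" and DT where dT: "\<And>k x. (T k has_derivative blinfun_apply (DT k x)) (at x)"
    and cT: "\<And>k. continuous_on UNIV (DT k)" and nDT: "\<And>k x. norm (DT k x) \<le> 2 * (1/2)^k"
    and T_range: "\<And>k x. 0 \<le> T k x \<and> T k x \<le> (1/4)^k"
    and T_zero: "\<And>k x. infdist x (- G) = 0 \<Longrightarrow> T k x = 0"
    and T_pos: "\<And>k x. 1 \<le> 2^k * infdist x (- G) \<Longrightarrow> 0 < T k x"
    using C1_distance_layer[OF ps, where S="- G"] by metis
  have sumT: "summable (\<lambda>k. T k x)" for x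
    by (rule summable_comparison_test'[where g="\<lambda>k. (1/4)^k"]) (use T_range in auto)
  have "C1_on UNIV (\<lambda>x. \<Sum>k. T k x)"
    by (rule C1_on_suminf[OF dT cT nDT _ sumT]) (simp add: summable_geometric)
  moreover have "0 \<le> (\<Sum>k. T k x)" for x using sumT T_range by (simp add: suminf_nonneg)
  moreover have "0 < (\<Sum>k. T k x) \<longleftrightarrow> x \<in> G" for x
  proof
    assume "x \<in> G"
    then have "infdist x (- G) > 0"
      using infdist_pos_not_in_closed[of "- G" x] G False by auto
    moreover obtain k :: nat where "1 / infdist x (- G) < 2^k"
      using real_arch_pow[of 2 "1 / infdist x (- G)"] by auto
    ultimately have "1 \<le> 2^k * infdist x (- G)" by (simp add: field_simps)
    then show "0 < (\<Sum>k. T k x)" using sumT T_range T_pos by (intro suminf_pos2) auto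
  next
    assume "0 < (\<Sum>k. T k x)"
    moreover have "x \<notin> G \<Longrightarrow> (\<Sum>k. T k x) = 0" using T_zero by simp
    ultimately show "x \<in> G" by force
  qed
  ultimately show ?thesis by blast
qed


section \<open>Bounded projections onto complemented subspaces\<close>

definition component_ball :: "('x::real_normed_vector \<Rightarrow> 'x) \<Rightarrow> real \<Rightarrow> 'x set" where
  "component_ball P r = {x. norm (P x) \<le> r \<and> norm (x - P x) \<le> r}"

lemma component_ball_diff:
  assumes "linear P" "s \<in> component_ball P r" "t \<in> component_ball P r"
  shows "s - t \<in> component_ball P (2 * r)"
proof -
  have "norm (P (s - t)) \<le> norm (P s) + norm (P t)"
    using norm_triangle_ineq4 by (simp add: linear_diff[OF assms(1)])
  moreover have "norm ((s - t) - P (s - t)) \<le> norm (s - P s) + norm (t - P t)"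
    using norm_triangle_ineq4[of "s - P s" "t - P t"] by (simp add: linear_diff[OF assms(1)] algebra_simps)
  ultimately show ?thesis using assms(2,3) unfolding component_ball_def by auto
qed

lemma component_ball_scale:
  assumes "linear P" "c > 0" "x \<in> component_ball P r"
  shows "c *\<^sub>R x \<in> component_ball P (c * r)"
proof -
  have "c *\<^sub>R x - P (c *\<^sub>R x) = c *\<^sub>R (x - P x)"
    by (simp add: linear_scale[OF assms(1)] algebra_simps)
  then show ?thesis
    using assms(2,3) by (simp add: component_ball_def linear_scale[OF assms(1)])
qed

lemma component_ball_Baire:
  fixes P :: "'x::banach \<Rightarrow> 'x"
  shows "\<exists>r a \<delta>. \<delta> > 0 \<and> ball a \<delta> \<subseteq> closure (component_ball P r)"
proof (rule ccontr)
  define S where "S n = closure (component_ball P (real n))" for n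
  assume "\<not> ?thesis"
  then have "interior (S n) = {}" for n
    unfolding S_def by (meson mem_interior equals0I)
  then have "euclidean interior_of \<Union>(range S) = {}"
    by (intro Baire_category_alt) (auto simp: S_def completely_metrizable_space_euclidean)
  moreover have "\<Union>(range S) = UNIV"
  proof safe
    fix x :: 'x
    obtain n :: nat where "max (norm (P x)) (norm (x - P x)) \<le> real n" using real_arch_simple by blast
    then have "x \<in> S n" unfolding S_def component_ball_def using closure_subset by fastforce
    then show "x \<in> \<Union>(range S)" by blast
  qed simp
  ultimately show False by simp
qed

lemma ball_zero_subset_closure_component_ball:
  fixes P :: "'x::real_normed_vector \<Rightarrow> 'x"
  assumes lin: "linear P" and ball: "ball a \<delta> \<subseteq> closure (component_ball P r)"
  shows "ball 0 \<delta> \<subseteq> closure (component_ball P (2 * r))"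
proof
  fix u :: 'x assume u: "u \<in> ball 0 \<delta>"
  have "0 < \<delta>" using u norm_ge_zero[of u] unfolding mem_ball_0 by linarith
  then have au: "a + u \<in> closure (component_ball P r)" and a: "a \<in> closure (component_ball P r)"
    using u ball by (auto simp: dist_norm)
  show "u \<in> closure (component_ball P (2 * r))"
    unfolding closure_approachable
  proof (intro allI impI)
    fix \<epsilon> :: real assume "\<epsilon> > 0"
    then obtain s t where st: "s \<in> component_ball P r" "dist s (a + u) < \<epsilon>/2"
      "t \<in> component_ball P r" "dist t a < \<epsilon>/2"
      using au a unfolding closure_approachable by (meson half_gt_zero)
    have "dist (s - t) u \<le> dist s (a + u) + dist t a"
      using norm_triangle_ineq4[of "s - (a + u)" "t - a"] by (simp add: dist_norm algebra_simps)
    then show "\<exists>y\<in>component_ball P (2 * r). dist y u < \<epsilon>"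
      using st component_ball_diff[OF lin st(1,3)] by (intro bexI[of _ "s - t"]) auto
  qed
qed

lemma linear_component_approximation:
  fixes P :: "'x::banach \<Rightarrow> 'x"
  assumes lin: "linear P"
  obtains M where "M > 0" "\<And>x \<eta>. \<eta> > 0 \<Longrightarrow> \<exists>s\<in>component_ball P (M * norm x). norm (x - s) < \<eta>"
proof -
  obtain r a \<delta> where \<delta>: "\<delta> > 0" and ball: "ball a \<delta> \<subseteq> closure (component_ball P r)"
    using component_ball_Baire by blast
  have ball0: "ball 0 \<delta> \<subseteq> closure (component_ball P (2 * r))"
    by (rule ball_zero_subset_closure_component_ball[OF lin ball])
  have r: "r \<ge> 0"
  proof (rule ccontr)
    assume "\<not> r \<ge> 0"
    then have "component_ball P (2 * r) = {}"
      by (auto simp: component_ball_def) (smt (verit) norm_ge_zero)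
    then show False using ball0 \<delta> by auto
  qed
  define M where "M = 4 * r / \<delta> + 1"
  have "M > 0" unfolding M_def using \<delta> r by (simp add: add_nonneg_pos)
  moreover have "\<exists>s\<in>component_ball P (M * norm x). norm (x - s) < \<eta>" if \<eta>: "\<eta> > 0" for x \<eta>
  proof (cases "x = 0")
    case True
    then show ?thesis using \<eta> by (intro bexI[of _ 0]) (simp_all add: component_ball_def linear_0[OF lin])
  next
    case False
    define c where "c = \<delta> / (2 * norm x)"
    have c: "c > 0" "norm (c *\<^sub>R x) < \<delta>" unfolding c_def using False \<delta> by auto
    then have "c *\<^sub>R x \<in> closure (component_ball P (2 * r))" using ball0 by auto
    then obtain s' where s': "s' \<in> component_ball P (2 * r)" "dist s' (c *\<^sub>R x) < \<eta> * c"
      using \<eta> c(1) unfolding closure_approachable by (meson mult_pos_pos)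
    have "(1/c) *\<^sub>R s' \<in> component_ball P ((1/c) * (2 * r))"
      using c(1) s'(1) by (intro component_ball_scale[OF lin]) auto
    moreover have "(1/c) * (2 * r) \<le> M * norm x"
      unfolding c_def M_def using False \<delta> r by (simp add: field_simps)
    moreover have "norm (x - (1/c) *\<^sub>R s') = dist s' (c *\<^sub>R x) / c"
    proof -
      have "x - (1/c) *\<^sub>R s' = (1/c) *\<^sub>R (c *\<^sub>R x - s')" using c(1) by (simp add: algebra_simps)
      then show ?thesis using c(1) by (simp add: dist_norm norm_minus_commute)
    qed
    ultimately show ?thesis
      using s'(2) c(1) by (intro bexI[of _ "(1/c) *\<^sub>R s'"]) (auto simp: component_ball_def divide_less_eq)
  qed
  ultimately show ?thesis using that by blast
qed

lemma component_ball_mono: "r \<le> r' \<Longrightarrow> component_ball P r \<subseteq> component_ball P r'"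
  unfolding component_ball_def by auto

lemma component_series_decomposition:
  fixes P :: "'x::banach \<Rightarrow> 'x"
  assumes lin: "linear P" and M: "M > 0"
    and approx: "\<And>x \<eta>. \<eta> > 0 \<Longrightarrow> \<exists>s\<in>component_ball P (M * norm x). norm (x - s) < \<eta>"
  shows "\<exists>s. s sums x \<and> (\<forall>i. s i \<in> component_ball P (M * norm x * (1/2)^i))"
proof (cases "x = 0")
  case True
  then show ?thesis
    by (intro exI[of _ "\<lambda>i. 0"]) (simp add: component_ball_def linear_0[OF lin])
next
  case False
  define sf where "sf y \<eta> = (SOME s. s \<in> component_ball P (M * norm y) \<and> norm (y - s) < \<eta>)" for y \<eta>
  have sf: "sf y \<eta> \<in> component_ball P (M * norm y) \<and> norm (y - sf y \<eta>) < \<eta>" if "\<eta> > 0" for y \<eta>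
  proof -
    have "\<exists>s. s \<in> component_ball P (M * norm y) \<and> norm (y - s) < \<eta>" using approx[OF that] by blast
    then show ?thesis unfolding sf_def by (rule someI_ex)
  qed
  define \<eta> where "\<eta> i = norm x / 2 ^ Suc i" for i :: nat
  have \<eta>_pos: "\<eta> i > 0" for i unfolding \<eta>_def using False by simp
  define r where "r = rec_nat x (\<lambda>i ri. ri - sf ri (\<eta> i))"
  have r0: "r 0 = x" and rS: "r (Suc i) = r i - sf (r i) (\<eta> i)" for i unfolding r_def by simp_all
  define s where "s i = sf (r i) (\<eta> i)" for i
  have r_norm: "norm (r i) \<le> norm x * (1/2)^i" for i
  proof (cases i)
    case (Suc j)
    have "norm (r (Suc j)) < \<eta> j" using sf[OF \<eta>_pos[of j], of "r j"] rS[of j] by simp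
    then show ?thesis using Suc unfolding \<eta>_def by (simp add: power_one_over)
  qed (simp add: r0)
  have "s i \<in> component_ball P (M * norm x * (1/2)^i)" for i
  proof -
    have "M * norm (r i) \<le> M * norm x * (1/2)^i" using r_norm[of i] M by (simp add: mult.assoc)
    then show ?thesis
      using sf[OF \<eta>_pos[of i], of "r i"] component_ball_mono unfolding s_def by blast
  qed
  moreover have "s sums x"
  proof -
    have partial: "(\<Sum>i<n. s i) = x - r n" for n
      by (induction n) (simp_all add: r0 rS s_def)
    have "\<forall>\<^sub>F n in sequentially. norm (norm (r n)) \<le> norm x * (1/2)^n"
      using r_norm by (simp add: always_eventually)
    moreover have "(\<lambda>n. norm x * (1/2::real)^n) \<longlonglongrightarrow> 0"
      by (intro tendsto_mult_right_zero LIMSEQ_power_zero) simp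
    ultimately have "(\<lambda>n. norm (r n)) \<longlonglongrightarrow> 0" by (rule Lim_null_comparison)
    then have "r \<longlonglongrightarrow> 0" by (rule tendsto_norm_zero_cancel)
    then have "(\<lambda>n. x - r n) \<longlonglongrightarrow> x - 0" by (intro tendsto_diff tendsto_const)
    then show ?thesis unfolding sums_def partial by simp
  qed
  ultimately show ?thesis by blast
qed

text \<open>The closed graph theorem for projections, by the usual Baire category argument.\<close>

lemma linear_projection_bounded:
  fixes P :: "'x::banach \<Rightarrow> 'x"
  assumes lin: "linear P" and Y: "subspace Y" "closed Y" and Z: "subspace Z" "closed Z"
    and PY: "\<And>x. P x \<in> Y" "\<And>x. x - P x \<in> Z"
    and uniq: "\<And>x y. y \<in> Y \<Longrightarrow> x - y \<in> Z \<Longrightarrow> P x = y"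
  shows "bounded_linear P"
proof -
  obtain M where M: "M > 0" "\<And>x \<eta>. \<eta> > 0 \<Longrightarrow> \<exists>s\<in>component_ball P (M * norm x). norm (x - s) < \<eta>"
    using linear_component_approximation[OF lin] by blast
  have "norm (P x) \<le> norm x * (2 * M)" for x
  proof -
    obtain s where s: "s sums x" "\<And>i. s i \<in> component_ball P (M * norm x * (1/2)^i)"
      using component_series_decomposition[OF lin M] by blast
    have geo: "summable (\<lambda>i. M * norm x * (1/2::real)^i)" by (simp add: summable_geometric)
    have sumP: "summable (\<lambda>i. norm (P (s i)))" and sumZ: "summable (\<lambda>i. s i - P (s i))"
      using s(2) by (auto simp: component_ball_def intro: summable_comparison_test[OF _ geo])
    have "(\<Sum>i<n. P (s i)) \<in> Y" "(\<Sum>i<n. s i - P (s i)) \<in> Z" for n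
      using PY Y(1) Z(1) by (simp_all add: subspace_sum)
    then have in_Y: "(\<Sum>i. P (s i)) \<in> Y" and in_Z: "(\<Sum>i. s i - P (s i)) \<in> Z"
      using closed_sequentially[OF Y(2) _ summable_LIMSEQ[OF summable_norm_cancel[OF sumP]]]
        closed_sequentially[OF Z(2) _ summable_LIMSEQ[OF sumZ]] by blast+
    have "(\<lambda>i. P (s i) + (s i - P (s i))) sums ((\<Sum>i. P (s i)) + (\<Sum>i. s i - P (s i)))"
      by (intro sums_add summable_sums summable_norm_cancel[OF sumP] sumZ)
    then have "x = (\<Sum>i. P (s i)) + (\<Sum>i. s i - P (s i))"
      using s(1) by (simp add: sums_unique2)
    then have "P x = (\<Sum>i. P (s i))"
      using uniq[OF in_Y] in_Z by (metis add_diff_cancel_left')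
    also have "norm \<dots> \<le> (\<Sum>i. norm (P (s i)))" by (rule summable_norm[OF sumP])
    also have "\<dots> \<le> (\<Sum>i. M * norm x * (1/2)^i)"
      using s(2) by (intro suminf_le[OF _ sumP geo]) (auto simp: component_ball_def)
    also have "\<dots> = norm x * (2 * M)" by (simp add: suminf_mult suminf_geometric)
    finally show ?thesis .
  qed
  then show ?thesis
    using lin by (intro bounded_linear_intro[of P "2 * M"]) (auto simp: linear_add linear_scale)
qed

lemma projection_along_complement_linear:
  assumes Y: "subspace Y" and Z: "subspace Z"
    and PY: "\<And>x. P x \<in> Y" "\<And>x. x - P x \<in> Z"
    and uniq: "\<And>x y. y \<in> Y \<Longrightarrow> x - y \<in> Z \<Longrightarrow> P x = y"
  shows "linear P"
proof (rule linearI)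
  fix a b
  show "P (a + b) = P a + P b"
  proof (rule uniq)
    show "P a + P b \<in> Y" using PY Y by (simp add: subspace_add)
    have "a + b - (P a + P b) = (a - P a) + (b - P b)" by (simp add: algebra_simps)
    moreover have "(a - P a) + (b - P b) \<in> Z" using PY Z by (simp add: subspace_add)
    ultimately show "a + b - (P a + P b) \<in> Z" by (simp only:)
  qed
next
  fix c :: real and a
  show "P (c *\<^sub>R a) = c *\<^sub>R P a"
  proof (rule uniq)
    show "c *\<^sub>R P a \<in> Y" using PY Y by (simp add: subspace_scale)
    have "c *\<^sub>R a - c *\<^sub>R P a = c *\<^sub>R (a - P a)" by (simp add: algebra_simps)
    moreover have "c *\<^sub>R (a - P a) \<in> Z" using PY Z by (simp add: subspace_scale)
    ultimately show "c *\<^sub>R a - c *\<^sub>R P a \<in> Z" by (simp only:)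
  qed
qed

lemma split_subspace_projection:
  fixes Y :: "'x::banach set"
  assumes "split_subspace Y"
  shows "\<exists>P. bounded_linear P \<and> (\<forall>x. P x \<in> Y) \<and> (\<forall>y\<in>Y. P y = y)"
proof -
  obtain Z where Y: "subspace Y" "closed Y" and Z: "subspace Z" "closed Z" "Y \<inter> Z = {0}"
    and dec: "\<And>x. \<exists>y\<in>Y. \<exists>z\<in>Z. x = y + z"
    using assms unfolding split_subspace_def by blast
  define P where "P x = (SOME y. y \<in> Y \<and> x - y \<in> Z)" for x
  have PY: "P x \<in> Y" "x - P x \<in> Z" for x
  proof -
    obtain y z where "y \<in> Y" "z \<in> Z" "x = y + z" using dec[of x] by blast
    then have "\<exists>y. y \<in> Y \<and> x - y \<in> Z" by (intro exI[of _ y]) simp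
    then have "P x \<in> Y \<and> x - P x \<in> Z" unfolding P_def by (rule someI_ex)
    then show "P x \<in> Y" "x - P x \<in> Z" by auto
  qed
  have uniq: "P x = y" if "y \<in> Y" "x - y \<in> Z" for x y
  proof -
    have "P x - y \<in> Y" using that PY Y(1) by (simp add: subspace_diff)
    moreover have "P x - y \<in> Z"
      using subspace_diff[OF Z(1) that(2) PY(2)[of x]] by (simp add: algebra_simps)
    ultimately have "P x - y \<in> Y \<inter> Z" by blast
    then show ?thesis using Z(3) by simp
  qed
  have "bounded_linear P"
    by (rule linear_projection_bounded[OF projection_along_complement_linear[OF Y(1) Z(1) PY uniq]
          Y Z(1,2) PY uniq])
  moreover have "P y = y" if "y \<in> Y" for y using uniq[OF that] Z(1) by (simp add: subspace_0)
  ultimately show ?thesis using PY by blast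
qed

section \<open>Local extensions and their gluing\<close>

lemma continuous_on_blinfun_compose_projection:
  fixes P :: "'x::real_normed_vector \<Rightarrow> 'x" and D :: "'x \<Rightarrow> ('x \<Rightarrow>\<^sub>L real)"
  assumes P: "bounded_linear P" "\<And>x. P x \<in> Y" and W: "\<And>x. x \<in> W \<Longrightarrow> P x \<in> V"
    and Dc: "\<And>x e. x \<in> V \<Longrightarrow> e > 0 \<Longrightarrow> \<exists>d>0. \<forall>x'\<in>V. dist x' x < d \<longrightarrow>
            (\<forall>v\<in>Y. \<bar>D x' v - D x v\<bar> \<le> e * norm v)"
  shows "continuous_on W (\<lambda>x. D (P x) o\<^sub>L Blinfun P)"
  unfolding continuous_on_iff
proof (intro ballI allI impI)
  fix x and e :: real assume x: "x \<in> W" and e: "e > 0"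
  obtain K where K: "K > 0" "\<And>v. norm (P v) \<le> norm v * K" using bounded_linear.pos_bounded[OF P(1)] by blast
  have BP: "blinfun_apply (Blinfun P) = P" using P(1) by (rule bounded_linear_Blinfun_apply)
  have e2: "e / (2 * K) > 0" using e K(1) by simp
  obtain d where d: "d > 0" "\<forall>x'\<in>V. dist x' (P x) < d \<longrightarrow> (\<forall>v\<in>Y. \<bar>D x' v - D (P x) v\<bar> \<le> e / (2 * K) * norm v)"
    using Dc[OF W[OF x] e2] by blast
  show "\<exists>\<delta>>0. \<forall>x'\<in>W. dist x' x < \<delta> \<longrightarrow> dist (D (P x') o\<^sub>L Blinfun P) (D (P x) o\<^sub>L Blinfun P) < e"
  proof (intro exI[of _ "d / K"] conjI ballI impI)
    show "d / K > 0" using d K by simp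
    fix x' assume x': "x' \<in> W" "dist x' x < d / K"
    have "dist (P x') (P x) \<le> dist x' x * K"
      using K(2)[of "x' - x"] by (simp add: dist_norm linear_diff[OF bounded_linear.linear[OF P(1)]])
    also have "\<dots> < d" using x'(2) K(1) by (simp add: field_simps)
    finally have dd: "dist (P x') (P x) < d" .
    have "norm ((D (P x') o\<^sub>L Blinfun P) - (D (P x) o\<^sub>L Blinfun P)) \<le> e/2"
    proof (rule norm_blinfun_bound)
      show "0 \<le> e/2" using e by simp
      fix v
      have "\<bar>D (P x') (P v) - D (P x) (P v)\<bar> \<le> e / (2 * K) * norm (P v)"
        using d(2) W[OF x'(1)] dd P(2) by blast
      also have "\<dots> \<le> e / (2 * K) * (norm v * K)" using K(2)[of v] e2 by (intro mult_left_mono) auto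
      also have "\<dots> = e/2 * norm v" using K(1) by (simp add: field_simps)
      finally show "norm (blinfun_apply ((D (P x') o\<^sub>L Blinfun P) - (D (P x) o\<^sub>L Blinfun P)) v) \<le> e/2 * norm v"
        by (simp add: blinfun.diff_left BP)
    qed
    then show "dist (D (P x') o\<^sub>L Blinfun P) (D (P x) o\<^sub>L Blinfun P) < e" using e by (simp add: dist_norm)
  qed
qed

lemma C1_rel_compose_projection:
  fixes g :: "'x::real_normed_vector \<Rightarrow> real"
  assumes rel: "C1_rel Y V g" and P: "bounded_linear P" "\<And>x. P x \<in> Y"
    and S: "open S" and V: "V = S \<inter> Y"
  shows "open (S \<inter> P -` S)" "C1_on (S \<inter> P -` S) (\<lambda>x. g (P x))"
proof -
  obtain D where D: "\<And>x. x \<in> V \<Longrightarrow> (g has_derivative blinfun_apply (D x)) (at x within V)"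
    and Dc: "\<And>x e. x \<in> V \<Longrightarrow> e > 0 \<Longrightarrow> \<exists>d>0. \<forall>x'\<in>V. dist x' x < d \<longrightarrow>
            (\<forall>v\<in>Y. \<bar>D x' v - D x v\<bar> \<le> e * norm v)"
    using rel unfolding C1_rel_def by blast
  define W where "W = S \<inter> P -` S"
  have "open W"
    unfolding W_def using S P(1) by (intro open_Int continuous_open_vimage linear_continuous_at) auto
  then show "open (S \<inter> P -` S)" unfolding W_def .
  have PW: "P x \<in> V" if "x \<in> W" for x using that P(2) unfolding W_def V by auto
  have BP: "blinfun_apply (Blinfun P) = P" using P(1) by (rule bounded_linear_Blinfun_apply)
  have "C1_on W (\<lambda>x. g (P x))"
  proof (rule C1_onI[where D="\<lambda>x. D (P x) o\<^sub>L Blinfun P"])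
    fix x assume x: "x \<in> W"
    have "((\<lambda>x. g (P x)) has_derivative (\<lambda>y. D (P x) (P y))) (at x within W)"
      by (rule has_derivative_in_compose2[where t=V, OF D _ x bounded_linear_imp_has_derivative[OF P(1)]])
        (use PW in auto)
    moreover have "blinfun_apply (D (P x) o\<^sub>L Blinfun P) = (\<lambda>y. D (P x) (P y))"
      by (simp add: fun_eq_iff BP)
    ultimately show "((\<lambda>x. g (P x)) has_derivative blinfun_apply (D (P x) o\<^sub>L Blinfun P)) (at x)"
      using at_within_open[OF x \<open>open W\<close>] by simp
  qed (rule continuous_on_blinfun_compose_projection[OF P PW Dc])
  then show "C1_on (S \<inter> P -` S) (\<lambda>x. g (P x))" unfolding W_def .
qed


lemma C1_bump_in_chart:
  fixes \<phi> :: "'m::topological_space \<Rightarrow> 'x::banach"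
  assumes A: "C1_atlas A" and ps: "property_star TYPE('x)" and U: "atlas_chart A U \<phi>"
    and G: "open G" "closure G \<subseteq> U"
  shows "\<exists>h. C1_fun A h \<and> (\<forall>m. 0 \<le> h m) \<and> (\<forall>m. 0 < h m \<longleftrightarrow> m \<in> G)"
proof -
  note chart = atlas_chartD[OF U]
  have GU: "G \<subseteq> U" using G(2) closure_subset by blast
  then have "open (\<phi> ` G)" using is_chart_open_image[OF chart(1) G(1)] by (simp add: Int_absorb1)
  then obtain ht :: "'x \<Rightarrow> real" where ht: "C1_on UNIV ht" "\<And>x. 0 \<le> ht x" "\<And>x. 0 < ht x \<longleftrightarrow> x \<in> \<phi> ` G"
    using C1_bump_on_model_space[OF ps] by blast
  have pos: "0 < ht (\<phi> m) \<longleftrightarrow> m \<in> G" if "m \<in> U" for m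
    using ht(3) that GU chart(3) by (auto simp: inj_on_def)
  define h where "h m = (if m \<in> U then ht (\<phi> m) else 0)" for m
  have "C1_fun A h"
    unfolding h_def
  proof (rule C1_fun_extend_by_zero[OF A chart(2) _ G(2)])
    show "C1_fun_on A U (\<lambda>m. ht (\<phi> m))"
      using C1_fun_on_chart_pullback[OF A U order_refl C1_on_subset[OF ht(1)]] by simp
    show "ht (\<phi> m) = 0" if "m \<in> U" "m \<notin> G" for m
      using pos[of m] ht(2)[of "\<phi> m"] that by simp
  qed
  moreover have "0 \<le> h m" "0 < h m \<longleftrightarrow> m \<in> G" for m
    unfolding h_def using ht(2) pos GU by auto
  ultimately show ?thesis by blast
qed

definition C1_extendable_on :: "('m::topological_space set \<times> ('m \<Rightarrow> 'x::banach)) set \<Rightarrow>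
    'm set \<Rightarrow> ('m \<Rightarrow> real) \<Rightarrow> 'm set \<Rightarrow> bool" where
  "C1_extendable_on A N f W \<longleftrightarrow> open W \<and> (\<exists>U \<phi>. atlas_chart A U \<phi> \<and> W \<subseteq> U) \<and>
     (\<exists>e. C1_fun_on A W e \<and> (\<forall>m\<in>N \<inter> W. e m = f m))"

lemma submanifold_chart_C1_extendable:
  assumes A: "C1_atlas A" and sc: "submanifold_chart A N U \<phi> Y"
    and fN: "C1_fun_on_sub A N f" and q: "q \<in> U \<inter> N"
  shows "\<exists>W. q \<in> W \<and> C1_extendable_on A N f W"
proof -
  have U: "atlas_chart A U \<phi>" and Y: "split_subspace Y" and UY: "\<phi> ` (U \<inter> N) = \<phi> ` U \<inter> Y"
    using sc unfolding submanifold_chart_def by auto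
  note chart = atlas_chartD[OF U]
  obtain Pr where Pr: "bounded_linear Pr" "\<And>x. Pr x \<in> Y" "\<And>y. y \<in> Y \<Longrightarrow> Pr y = y"
    using split_subspace_projection[OF Y] by blast
  have rel: "C1_rel Y (\<phi> ` U \<inter> Y) (f \<circ> inv_into U \<phi>)"
    using fN sc UY unfolding C1_fun_on_sub_def by metis
  define S where "S = \<phi> ` U \<inter> Pr -` \<phi> ` U"
  have S: "open S" "C1_on S (\<lambda>x. (f \<circ> inv_into U \<phi>) (Pr x))"
    using C1_rel_compose_projection[OF rel Pr(1,2) chart(4) refl] unfolding S_def by auto
  define W where "W = U \<inter> \<phi> -` S"
  have "open W"
    using continuous_on_open_vimage[OF chart(2)] chart(5) S(1) unfolding W_def by (metis Int_commute)
  moreover have "W \<subseteq> U" unfolding W_def by blast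
  moreover have "C1_fun_on A W (\<lambda>m. (f \<circ> inv_into U \<phi>) (Pr (\<phi> m)))"
    by (rule C1_fun_on_chart_pullback[OF A U \<open>W \<subseteq> U\<close> C1_on_subset[OF S(2)]]) (auto simp: W_def)
  moreover have "(f \<circ> inv_into U \<phi>) (Pr (\<phi> m)) = f m" if "m \<in> N \<inter> W" for m
  proof -
    have "\<phi> m \<in> Y" using UY that unfolding W_def by blast
    then show ?thesis using Pr(3) inv_into_f_f[OF chart(3)] that unfolding W_def by simp
  qed
  moreover have "q \<in> W"
  proof -
    have "\<phi> q \<in> Y" using UY q by blast
    then show ?thesis unfolding W_def S_def using q Pr(3) by simp
  qed
  ultimately show ?thesis unfolding C1_extendable_on_def using U by blast
qed

lemma C1_extendable_neighbourhood:
  assumes A: "C1_atlas A" and N: "closed N" "C1_submanifold A N" and fN: "C1_fun_on_sub A N f"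
  shows "\<exists>W. q \<in> W \<and> C1_extendable_on A N f W"
proof (cases "q \<in> N")
  case True
  then obtain U \<phi> Y where "q \<in> U" "submanifold_chart A N U \<phi> Y"
    using N(2) unfolding C1_submanifold_def by blast
  then show ?thesis using submanifold_chart_C1_extendable[OF A _ fN] True by blast
next
  case False
  obtain U \<phi> where U: "(U, \<phi>) \<in> A" "q \<in> U"
    using A unfolding C1_atlas_def by blast
  have "open (U - N)" using atlas_chartD(2)[OF atlas_chart_if_mem[OF A U(1)]] N(1) by blast
  moreover have "C1_fun_on A (U - N) (\<lambda>m. 0)" by (rule C1_fun_on_const)
  ultimately have "C1_extendable_on A N f (U - N)"
    unfolding C1_extendable_on_def using atlas_chart_if_mem[OF A U(1)] by blast
  then show ?thesis using U(2) False by blast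
qed

lemma C1_weighted_local_extension:
  fixes A :: "('m::topological_space set \<times> ('m \<Rightarrow> 'x::banach)) set"
  assumes A: "C1_atlas A" and ps: "property_star TYPE('x)"
    and V: "open V" "closure V \<subseteq> W" and W: "C1_extendable_on A N f W"
  shows "\<exists>h g. C1_fun A h \<and> (\<forall>m. 0 \<le> h m) \<and> (\<forall>m. 0 < h m \<longleftrightarrow> m \<in> V) \<and>
    C1_fun A g \<and> (\<forall>m\<in>N. g m = h m * f m) \<and> (\<forall>m. m \<notin> V \<longrightarrow> g m = 0)"
proof -
  obtain U and \<phi> :: "'m \<Rightarrow> 'x" and e where U: "atlas_chart A U \<phi>" "W \<subseteq> U" and W_open: "open W"
    and e: "C1_fun_on A W e" "\<And>m. m \<in> N \<inter> W \<Longrightarrow> e m = f m"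
    using W unfolding C1_extendable_on_def by blast
  have "closure V \<subseteq> U" using V(2) U(2) by (rule order_trans)
  then obtain h where h: "C1_fun A h" "\<And>m. 0 \<le> h m" "\<And>m. 0 < h m \<longleftrightarrow> m \<in> V"
    using C1_bump_in_chart[OF A ps U(1) V(1)] by blast
  have h0: "h m = 0" if "m \<notin> V" for m using h(2,3)[of m] that by simp
  define g where "g m = (if m \<in> W then h m * e m else 0)" for m
  have "C1_fun A g"
    unfolding g_def
  proof (rule C1_fun_extend_by_zero[OF A W_open C1_fun_on_mult V(2)])
    show "C1_fun_on A W h" using C1_fun_on_subset[OF h(1)[unfolded C1_fun_eq_C1_fun_on_UNIV]] by blast
  qed (use e h0 in auto)
  moreover have "g m = h m * f m" if "m \<in> N" for m
  proof (cases "m \<in> W")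
    case False
    then have "m \<notin> V" using V(2) closure_subset by blast
    then show ?thesis using False h0 unfolding g_def by simp
  qed (use e(2) that in \<open>simp add: g_def\<close>)
  moreover have "g m = 0" if "m \<notin> V" for m using h0[OF that] unfolding g_def by simp
  ultimately show ?thesis using h by blast
qed

lemma locally_finite_family_finite_at:
  assumes "locally_finite_family \<V>"
  shows "finite {V\<in>\<V>. m \<in> V}"
proof -
  obtain W where W: "m \<in> W" "finite {V \<in> \<V>. V \<inter> W \<noteq> {}}"
    using assms unfolding locally_finite_family_def by blast
  show ?thesis by (rule finite_subset[OF _ W(2)]) (use W(1) in blast)
qed

lemma C1_fun_partition_of_unity_glue:
  assumes A: "C1_atlas A" and lf: "locally_finite_family \<V>" and cover: "\<Union>\<V> = UNIV"
    and h: "\<And>V. V \<in> \<V> \<Longrightarrow> C1_fun A (h V) \<and> (\<forall>m. 0 \<le> h V m) \<and> (\<forall>m. 0 < h V m \<longleftrightarrow> m \<in> V)"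
    and g: "\<And>V. V \<in> \<V> \<Longrightarrow> C1_fun A (g V) \<and> (\<forall>m\<in>N. g V m = h V m * f m) \<and> (\<forall>m. m \<notin> V \<longrightarrow> g V m = 0)"
  shows "\<exists>F. C1_fun A F \<and> (\<forall>x\<in>N. F x = f x)"
proof -
  define Sh where "Sh m = (\<Sum>V\<in>{V\<in>\<V>. m \<in> V}. h V m)" for m
  define Sg where "Sg m = (\<Sum>V\<in>{V\<in>\<V>. m \<in> V}. g V m)" for m
  have h0: "h V m = 0" if "V \<in> \<V>" "m \<notin> V" for V m
    using h[OF that(1)] that(2) by (meson linorder_not_le order_antisym)
  have Sh_pos: "Sh m > 0" for m
  proof -
    have "m \<in> \<Union>\<V>" using cover by simp
    then obtain V where V: "V \<in> \<V>" "m \<in> V" by blast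
    show ?thesis unfolding Sh_def
    proof (rule sum_pos2[OF locally_finite_family_finite_at[OF lf]])
      show "V \<in> {V \<in> \<V>. m \<in> V}" using V by simp
      show "0 < h V m" using h[OF V(1)] V(2) by blast
      show "0 \<le> h V' m" if "V' \<in> {V \<in> \<V>. m \<in> V}" for V' using h that by blast
    qed
  qed
  have "C1_fun A Sg" unfolding Sg_def
    by (rule C1_fun_locally_finite_sum[OF A lf]) (use g in blast)+
  moreover have "C1_fun A Sh" unfolding Sh_def
    by (rule C1_fun_locally_finite_sum[OF A lf]) (use h h0 in blast)+
  ultimately have "C1_fun A (\<lambda>m. Sg m / Sh m)"
    unfolding C1_fun_eq_C1_fun_on_UNIV
    by (rule C1_fun_on_divide[OF A]) (use Sh_pos in \<open>simp add: less_imp_neq[symmetric]\<close>)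
  moreover have "Sg m / Sh m = f m" if "m \<in> N" for m
  proof -
    have "Sg m = (\<Sum>V\<in>{V\<in>\<V>. m \<in> V}. h V m * f m)"
      unfolding Sg_def using g that by (intro sum.cong) auto
    then have "Sg m = Sh m * f m" unfolding Sh_def by (simp add: sum_distrib_right)
    then show ?thesis using Sh_pos[of m] by simp
  qed
  ultimately show ?thesis by blast
qed

lemma C1_extension_from_local_extensions:
  fixes A :: "('m::topological_space set \<times> ('m \<Rightarrow> 'x::banach)) set"
  assumes ps: "property_star TYPE('x)" and A: "C1_atlas A" and Pc: "paracompact_space TYPE('m)"
    and loc: "\<And>q. \<exists>W. q \<in> W \<and> C1_extendable_on A N f W"
  shows "\<exists>F. C1_fun A F \<and> (\<forall>x\<in>N. F x = f x)"
proof -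
  define \<U> where "\<U> = {G. open G \<and> (\<exists>W. closure G \<subseteq> W \<and> C1_extendable_on A N f W)}"
  have cover: "\<Union>\<U> = UNIV"
  proof safe
    fix q :: 'm
    obtain W where W: "q \<in> W" "C1_extendable_on A N f W" using loc by blast
    then have "open W" unfolding C1_extendable_on_def by blast
    then obtain G where "open G" "q \<in> G" "closure G \<subseteq> W"
      using paracompact_space_regular[OF Pc _ W(1)] by blast
    then show "q \<in> \<Union>\<U>" unfolding \<U>_def using W(2) by blast
  qed simp
  have "\<And>U. U \<in> \<U> \<Longrightarrow> open U" unfolding \<U>_def by blast
  then obtain \<V> where V: "\<And>V. V \<in> \<V> \<Longrightarrow> open V" "\<Union>\<V> = UNIV"
    "\<And>V. V \<in> \<V> \<Longrightarrow> \<exists>U\<in>\<U>. V \<subseteq> U" "locally_finite_family \<V>"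
    using paracompact_space_refinement[OF Pc _ cover] by metis
  have "\<exists>h g. C1_fun A h \<and> (\<forall>m. 0 \<le> h m) \<and> (\<forall>m. 0 < h m \<longleftrightarrow> m \<in> V) \<and>
      C1_fun A g \<and> (\<forall>m\<in>N. g m = h m * f m) \<and> (\<forall>m. m \<notin> V \<longrightarrow> g m = 0)" if VV: "V \<in> \<V>" for V
  proof -
    obtain G W where GW: "V \<subseteq> G" "closure G \<subseteq> W" "C1_extendable_on A N f W"
      using V(3)[OF VV] unfolding \<U>_def by blast
    have "closure V \<subseteq> W" using closure_mono[OF GW(1)] GW(2) by (rule order_trans)
    then show ?thesis by (rule C1_weighted_local_extension[OF A ps V(1)[OF VV] _ GW(3)])
  qed
  then obtain h g where "\<And>V. V \<in> \<V> \<Longrightarrow> C1_fun A (h V) \<and> (\<forall>m. 0 \<le> h V m) \<and> (\<forall>m. 0 < h V m \<longleftrightarrow> m \<in> V)"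
    "\<And>V. V \<in> \<V> \<Longrightarrow> C1_fun A (g V) \<and> (\<forall>m\<in>N. g V m = h V m * f m) \<and> (\<forall>m. m \<notin> V \<longrightarrow> g V m = 0)"
    by metis
  then show ?thesis by (rule C1_fun_partition_of_unity_glue[OF A V(4,2)])
qed

theorem corollary1p3:
  fixes A :: "('m::topological_space set \<times> ('m \<Rightarrow> 'x::banach)) set"
    and N :: "'m set"
    and f :: "'m \<Rightarrow> real"
  assumes "property_star TYPE('x)"
    and "C1_atlas A"
    and "paracompact_space TYPE('m)"
    and "closed N"
    and "C1_submanifold A N"
    and "C1_fun_on_sub A N f"
  shows "\<exists>F. C1_fun A F \<and> (\<forall>x\<in>N. F x = f x)"
  using C1_extension_from_local_extensions[OF assms(1-3) C1_extendable_neighbourhood[OF assms(2,4-6)]] .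


end
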